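(* Let $T$ be a tree on $n\ge7$ vertices such that every leaf $v$ of $T$ satisfies both $|N_2(v)|>\lceil n/2\rceil-4$ and $|N_{\ge4}(v)|<|N_2(v)|+4-\lceil n/2\rceil$. Then $T$ has diameter at most $3$.
   Context: For a vertex $v$ of a tree, $N_i(v)$ is the set of vertices at distance exactly $i$ from $v$ and $N_{\ge i}(v)$ the set of vertices at distance at least $i$ from $v$. The diameter of $T$ is the maximum distance between two of its vertices. *)

theory Defs
  imports Complex_Main
begin

definition simple_graph :: "'a set \<Rightarrow> ('a \<Rightarrow> 'a \<Rightarrow> bool) \<Rightarrow> bool" where
  "simple_graph V E \<longleftrightarrow> finite V \<and> (\<forall>u v. E u v \<longrightarrow> u \<in> V \<and> v \<in> V)
     \<and> (\<forall>u v. E u v \<longrightarrow> E v u) \<and> (\<forall>v. \<not> E v v)"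

definition edges :: "'a set \<Rightarrow> ('a \<Rightarrow> 'a \<Rightarrow> bool) \<Rightarrow> 'a set set" where
  "edges V E = {{u, v} | u v. u \<in> V \<and> v \<in> V \<and> E u v}"

definition is_walk :: "'a set \<Rightarrow> ('a \<Rightarrow> 'a \<Rightarrow> bool) \<Rightarrow> 'a list \<Rightarrow> bool" where
  "is_walk V E p \<longleftrightarrow> p \<noteq> [] \<and> set p \<subseteq> V \<and> (\<forall>i. Suc i < length p \<longrightarrow> E (p ! i) (p ! Suc i))"

definition connected_graph :: "'a set \<Rightarrow> ('a \<Rightarrow> 'a \<Rightarrow> bool) \<Rightarrow> bool" where
  "connected_graph V E \<longleftrightarrow> (\<forall>u\<in>V. \<forall>v\<in>V. \<exists>p. is_walk V E p \<and> hd p = u \<and> last p = v)"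

definition is_tree :: "'a set \<Rightarrow> ('a \<Rightarrow> 'a \<Rightarrow> bool) \<Rightarrow> bool" where
  "is_tree V E \<longleftrightarrow> simple_graph V E \<and> V \<noteq> {} \<and> connected_graph V E
     \<and> card (edges V E) + 1 = card V"

definition gdist :: "'a set \<Rightarrow> ('a \<Rightarrow> 'a \<Rightarrow> bool) \<Rightarrow> 'a \<Rightarrow> 'a \<Rightarrow> nat" where
  "gdist V E u v = (LEAST k. \<exists>p. is_walk V E p \<and> hd p = u \<and> last p = v \<and> length p = Suc k)"

definition degree :: "'a set \<Rightarrow> ('a \<Rightarrow> 'a \<Rightarrow> bool) \<Rightarrow> 'a \<Rightarrow> nat" where
  "degree V E v = card {u \<in> V. E v u}"

definition leaf :: "'a set \<Rightarrow> ('a \<Rightarrow> 'a \<Rightarrow> bool) \<Rightarrow> 'a \<Rightarrow> bool" where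
  "leaf V E v \<longleftrightarrow> v \<in> V \<and> degree V E v = 1"

definition sphere :: "'a set \<Rightarrow> ('a \<Rightarrow> 'a \<Rightarrow> bool) \<Rightarrow> 'a \<Rightarrow> nat \<Rightarrow> 'a set" where
  "sphere V E v i = {u \<in> V. gdist V E v u = i}"

definition far_set :: "'a set \<Rightarrow> ('a \<Rightarrow> 'a \<Rightarrow> bool) \<Rightarrow> 'a \<Rightarrow> nat \<Rightarrow> 'a set" where
  "far_set V E v i = {u \<in> V. gdist V E v u \<ge> i}"

definition diameter :: "'a set \<Rightarrow> ('a \<Rightarrow> 'a \<Rightarrow> bool) \<Rightarrow> nat" where
  "diameter V E = Max {gdist V E u v | u v. u \<in> V \<and> v \<in> V}"

end

theory Submission
  imports Defs
begin

text \<open>Let u, w realise the diameter D and suppose D \<ge> 4. Rooting the tree at u, every vertex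
  other than u has exactly one neighbour closer to u, all its other neighbours being one step
  farther. Hence w is a leaf, and its neighbour q lies at distance D - 1 from u. Every vertex at
  distance 2 from w is a neighbour of q other than w, and every neighbour of q other than its
  parent lies at distance D \<ge> 4 from u, so |N_2(w)| \<le> |N_{\<ge>4}(u)|; symmetrically
  |N_2(u)| \<le> |N_{\<ge>4}(w)|. Since \<lceil>n/2\<rceil> \<ge> 4 for n \<ge> 7, the second hypothesis
  applied to both leaves gives |N_{\<ge>4}(w)| < |N_2(w)| \<le> |N_{\<ge>4}(u)| < |N_2(u)| \<le> |N_{\<ge>4}(w)|.\<close>

lemma is_walk_snoc:
  assumes "is_walk V E p" "E (last p) y" "y \<in> V"
  shows "is_walk V E (p @ [y])"
  unfolding is_walk_def
proof (intro conjI allI impI)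
  show "p @ [y] \<noteq> []" by simp
  show "set (p @ [y]) \<subseteq> V" using assms unfolding is_walk_def by auto
  fix i assume i: "Suc i < length (p @ [y])"
  have "p \<noteq> []" using assms(1) unfolding is_walk_def by auto
  show "E ((p @ [y]) ! i) ((p @ [y]) ! Suc i)"
  proof (cases "Suc i < length p")
    case True
    then show ?thesis using assms(1) unfolding is_walk_def by (simp add: nth_append)
  next
    case False
    then have "i = length p - 1" using i by simp
    then show ?thesis using assms(2) \<open>p \<noteq> []\<close> by (simp add: nth_append last_conv_nth)
  qed
qed

lemma is_walk_butlast:
  assumes "is_walk V E p" "length p \<ge> 2"
  shows "is_walk V E (butlast p)"
proof -
  have "butlast p \<noteq> []" using assms(2) by (cases p) auto
  then show ?thesis using assms unfolding is_walk_def
    by (auto simp: nth_butlast dest: in_set_butlastD)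
qed

lemma is_walk_rev:
  assumes "is_walk V E p" "\<And>a b. E a b \<Longrightarrow> E b a"
  shows "is_walk V E (rev p)"
  unfolding is_walk_def
proof (intro conjI allI impI)
  show "rev p \<noteq> []" "set (rev p) \<subseteq> V" using assms unfolding is_walk_def by auto
  fix i assume i: "Suc i < length (rev p)"
  have "E (p ! (length p - Suc (Suc i))) (p ! Suc (length p - Suc (Suc i)))"
    using assms(1) i unfolding is_walk_def by auto
  moreover have "Suc (length p - Suc (Suc i)) = length p - Suc i" using i by simp
  ultimately show "E (rev p ! i) (rev p ! Suc i)" using i assms(2) by (simp add: rev_nth)
qed

lemma gdist_le_walk:
  assumes "is_walk V E p" "hd p = u" "last p = v"
  shows "gdist V E u v \<le> length p - 1"
proof -
  have "p \<noteq> []" using assms unfolding is_walk_def by auto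
  then show ?thesis unfolding gdist_def
    by (intro Least_le exI[of _ p]) (use assms in auto)
qed

locale connected_simple_graph =
  fixes V :: "'a set" and E :: "'a \<Rightarrow> 'a \<Rightarrow> bool"
  assumes simple: "simple_graph V E" and connected: "connected_graph V E"
begin

lemma finite_vertices: "finite V"
  using simple unfolding simple_graph_def by auto

lemma adj_in_vertices: "E a b \<Longrightarrow> a \<in> V \<and> b \<in> V"
  using simple unfolding simple_graph_def by auto

lemma adj_sym: "E a b \<Longrightarrow> E b a"
  using simple unfolding simple_graph_def by auto

lemma gdist_attained:
  assumes "u \<in> V" "v \<in> V"
  obtains p where "is_walk V E p" "hd p = u" "last p = v" "length p = Suc (gdist V E u v)"
proof -
  obtain p where p: "is_walk V E p" "hd p = u" "last p = v"
    using connected assms unfolding connected_graph_def by blast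
  then have "p \<noteq> []" unfolding is_walk_def by auto
  then have "\<exists>k p. is_walk V E p \<and> hd p = u \<and> last p = v \<and> length p = Suc k"
    using p by (intro exI[of _ "length p - 1"] exI[of _ p]) auto
  then have "\<exists>p. is_walk V E p \<and> hd p = u \<and> last p = v \<and> length p = Suc (gdist V E u v)"
    unfolding gdist_def by (rule LeastI_ex)
  then show ?thesis using that by blast
qed

lemma gdist_self: "u \<in> V \<Longrightarrow> gdist V E u u = 0"
  using gdist_le_walk[of V E "[u]" u u] unfolding is_walk_def by auto

lemma gdist_eq_0_imp_eq:
  assumes "u \<in> V" "v \<in> V" "gdist V E u v = 0"
  shows "u = v"
proof -
  obtain p where p: "is_walk V E p" "hd p = u" "last p = v" "length p = 1"
    using gdist_attained[OF assms(1,2)] assms(3) by auto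
  then obtain x where "p = [x]" by (cases p) auto
  then show ?thesis using p by auto
qed

lemma gdist_commute:
  assumes "u \<in> V" "v \<in> V"
  shows "gdist V E u v = gdist V E v u"
proof -
  have "gdist V E v u \<le> gdist V E u v" if uv: "u \<in> V" "v \<in> V" for u v
  proof -
    obtain p where p: "is_walk V E p" "hd p = u" "last p = v" "length p = Suc (gdist V E u v)"
      using gdist_attained[OF uv] .
    have "p \<noteq> []" using p unfolding is_walk_def by auto
    then show ?thesis using gdist_le_walk[OF is_walk_rev[OF p(1) adj_sym], of v u] p
      by (simp add: hd_rev last_rev)
  qed
  then show ?thesis using assms by (meson antisym)
qed

lemma exists_closer_neighbour:
  assumes u: "u \<in> V" and y: "y \<in> V" and "y \<noteq> u"
  obtains z where "z \<in> V" "E y z" "gdist V E u z + 1 = gdist V E u y"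
proof -
  obtain p where p: "is_walk V E p" "hd p = u" "last p = y" "length p = Suc (gdist V E u y)"
    using gdist_attained[OF u y] .
  have "gdist V E u y \<noteq> 0" using gdist_eq_0_imp_eq[OF u y] \<open>y \<noteq> u\<close> by auto
  then have len: "length p \<ge> 2" using p by simp
  define z where "z = p ! (length p - 2)"
  have "butlast p \<noteq> []" using len by (cases p) auto
  then have "last (butlast p) = z"
    using len unfolding z_def by (simp add: last_conv_nth nth_butlast numeral_2_eq_2)
  moreover have "hd (butlast p) = u" using p(2) len by (cases p) auto
  ultimately have closer: "gdist V E u z \<le> length p - 2"
    using gdist_le_walk[OF is_walk_butlast[OF p(1) len]] by (simp add: numeral_2_eq_2)
  have "E (p ! (length p - 2)) (p ! Suc (length p - 2))"
    using p(1) len unfolding is_walk_def by auto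
  moreover have "Suc (length p - 2) = length p - 1" using len by simp
  moreover have "p ! (length p - 1) = y" using p(3) len by (metis last_conv_nth list.size(3) not_numeral_le_zero)
  ultimately have "E z y" unfolding z_def by simp
  then have "z \<in> V" using adj_in_vertices by auto
  obtain q where q: "is_walk V E q" "hd q = u" "last q = z" "length q = Suc (gdist V E u z)"
    using gdist_attained[OF u \<open>z \<in> V\<close>] .
  have "is_walk V E (q @ [y])" using is_walk_snoc[OF q(1)] q(3) \<open>E z y\<close> y by simp
  then have "gdist V E u y \<le> gdist V E u z + 1"
    using gdist_le_walk[of V E "q @ [y]" u y] q by (cases q) auto
  with closer p(4) \<open>gdist V E u y \<noteq> 0\<close> have "gdist V E u z + 1 = gdist V E u y" by linarith
  then show ?thesis using that \<open>z \<in> V\<close> \<open>E z y\<close> adj_sym by blast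
qed

lemma sphere_2_of_leaf_subset:
  assumes "leaf V E w" "E w q"
  shows "sphere V E w 2 \<subseteq> {x \<in> V. E q x} - {w}"
proof
  fix x assume "x \<in> sphere V E w 2"
  then have x: "x \<in> V" "gdist V E w x = 2" unfolding sphere_def by auto
  have w: "w \<in> V" using assms(1) unfolding leaf_def by auto
  have "{z \<in> V. E w z} = {q}"
  proof -
    have "q \<in> {z \<in> V. E w z}" using assms(2) adj_in_vertices by auto
    moreover have "card {z \<in> V. E w z} = 1" using assms(1) unfolding leaf_def degree_def by auto
    ultimately show ?thesis by (metis card_1_singletonE singletonD)
  qed
  have "x \<noteq> w" using x gdist_self w by auto
  then obtain z where z: "z \<in> V" "E x z" "gdist V E w z = 1"
    using exists_closer_neighbour[OF w x(1)] x by auto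
  then have "z \<noteq> w" using gdist_self w by auto
  then obtain z0 where "z0 \<in> V" "E z z0" "gdist V E w z0 = 0"
    using exists_closer_neighbour[OF w z(1)] z(3) by auto
  then have "E w z" using gdist_eq_0_imp_eq[OF w] adj_sym by auto
  then have "z = q" using \<open>{z \<in> V. E w z} = {q}\<close> z(1) by auto
  then show "x \<in> {x \<in> V. E q x} - {w}" using z x \<open>x \<noteq> w\<close> adj_sym by auto
qed

end

locale tree_graph =
  fixes V :: "'a set" and E :: "'a \<Rightarrow> 'a \<Rightarrow> bool"
  assumes tree: "is_tree V E"

sublocale tree_graph \<subseteq> connected_simple_graph
  using tree unfolding is_tree_def by unfold_locales auto

context tree_graph
begin

lemma finite_edges: "finite (edges V E)"
proof -
  have "edges V E \<subseteq> (\<lambda>(a, b). {a, b}) ` (V \<times> V)" unfolding edges_def by auto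
  then show ?thesis using finite_vertices finite_subset by blast
qed

text \<open>The parent edges are pairwise distinct and there are |V| - 1 of them, so they exhaust
  the edges of the tree.\<close>

lemma edges_eq_parent_edges:
  assumes u: "u \<in> V"
  obtains par where
    "\<And>x. x \<in> V - {u} \<Longrightarrow> par x \<in> V \<and> E x (par x) \<and> gdist V E u (par x) + 1 = gdist V E u x"
    "edges V E = (\<lambda>x. {x, par x}) ` (V - {u})"
proof -
  define par where
    "par y = (SOME z. z \<in> V \<and> E y z \<and> gdist V E u z + 1 = gdist V E u y)" for y
  have par: "par x \<in> V \<and> E x (par x) \<and> gdist V E u (par x) + 1 = gdist V E u x"
    if "x \<in> V - {u}" for x
  proof -
    have "\<exists>z. z \<in> V \<and> E x z \<and> gdist V E u z + 1 = gdist V E u x"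
      using exists_closer_neighbour[OF u, of x] that by blast
    then show ?thesis unfolding par_def by (rule someI_ex)
  qed
  define parent_edge where "parent_edge x = {x, par x}" for x
  have "inj_on parent_edge (V - {u})"
  proof (rule inj_onI)
    fix a b assume a: "a \<in> V - {u}" and b: "b \<in> V - {u}" and "parent_edge a = parent_edge b"
    then have "a = b \<or> (a = par b \<and> b = par a)"
      unfolding parent_edge_def by (auto simp: doubleton_eq_iff)
    then show "a = b" using par[OF a] par[OF b] by auto
  qed
  then have "card (parent_edge ` (V - {u})) = card V - 1"
    using u finite_vertices by (simp add: card_image)
  also have "\<dots> = card (edges V E)" using tree unfolding is_tree_def by linarith
  moreover have "parent_edge ` (V - {u}) \<subseteq> edges V E"
    unfolding edges_def parent_edge_def using par by blast
  ultimately have "parent_edge ` (V - {u}) = edges V E"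
    using card_subset_eq[OF finite_edges] by simp
  then show ?thesis using that[of par] par unfolding parent_edge_def by simp
qed

lemma unique_closer_neighbour:
  assumes u: "u \<in> V" and y: "y \<in> V" and "y \<noteq> u"
  obtains z where "E y z" "gdist V E u z + 1 = gdist V E u y"
    "\<And>z'. E y z' \<Longrightarrow> z' \<noteq> z \<Longrightarrow> gdist V E u z' = gdist V E u y + 1"
proof -
  obtain par where par:
    "\<And>x. x \<in> V - {u} \<Longrightarrow> par x \<in> V \<and> E x (par x) \<and> gdist V E u (par x) + 1 = gdist V E u x"
    and edges: "edges V E = (\<lambda>x. {x, par x}) ` (V - {u})"
    using edges_eq_parent_edges[OF u] by blast
  have "gdist V E u z' = gdist V E u y + 1" if "E y z'" "z' \<noteq> par y" for z'
  proof -
    have "{y, z'} \<in> edges V E" unfolding edges_def using that adj_in_vertices by blast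
    then obtain y' where y': "y' \<in> V - {u}" "{y, z'} = {y', par y'}"
      using edges by blast
    then have "y = par y'" "z' = y'" using that by (auto simp: doubleton_eq_iff)
    then show ?thesis using par[OF y'(1)] by simp
  qed
  moreover have "E y (par y)" "gdist V E u (par y) + 1 = gdist V E u y"
    using par[of y] y \<open>y \<noteq> u\<close> by auto
  ultimately show ?thesis using that by blast
qed

lemma farthest_vertex_leaf:
  assumes u: "u \<in> V" and w: "w \<in> V" and "gdist V E u w \<ge> 4"
    and farthest: "\<And>b. b \<in> V \<Longrightarrow> gdist V E u b \<le> gdist V E u w"
  shows "leaf V E w" and "card (sphere V E w 2) \<le> card (far_set V E u 4)"
proof -
  let ?D = "gdist V E u w"
  have "w \<noteq> u" using assms(3) gdist_self u by auto
  then obtain q where q: "E w q" "gdist V E u q + 1 = ?D"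
    and farther: "\<And>z'. E w z' \<Longrightarrow> z' \<noteq> q \<Longrightarrow> gdist V E u z' = ?D + 1"
    using unique_closer_neighbour[OF u w] by metis
  have "q \<in> V" using adj_in_vertices q by auto
  have "{z \<in> V. E w z} = {q}"
    using farther farthest \<open>q \<in> V\<close> q(1) by fastforce
  then show "leaf V E w" unfolding leaf_def degree_def using w by simp
  have "q \<noteq> u" using q assms(3) gdist_self u by auto
  then obtain q' where "E q q'"
    and children: "\<And>x. E q x \<Longrightarrow> x \<noteq> q' \<Longrightarrow> gdist V E u x = gdist V E u q + 1"
    using unique_closer_neighbour[OF u \<open>q \<in> V\<close>] by metis
  define N where "N = {x \<in> V. E q x}"
  have "finite N" unfolding N_def using finite_vertices by simp
  have "w \<in> N" "q' \<in> N" unfolding N_def using w q(1) \<open>E q q'\<close> adj_sym adj_in_vertices by auto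
  have "N - {q'} \<subseteq> far_set V E u 4"
    unfolding N_def far_set_def using children q(2) assms(3) by auto
  have "card (sphere V E w 2) \<le> card (N - {w})"
    using sphere_2_of_leaf_subset[OF \<open>leaf V E w\<close> q(1)] \<open>finite N\<close>
    unfolding N_def by (intro card_mono) auto
  also have "\<dots> = card (N - {q'})" using \<open>w \<in> N\<close> \<open>q' \<in> N\<close> \<open>finite N\<close> by simp
  also have "\<dots> \<le> card (far_set V E u 4)"
    using \<open>N - {q'} \<subseteq> far_set V E u 4\<close> finite_vertices
    unfolding far_set_def by (intro card_mono) auto
  finally show "card (sphere V E w 2) \<le> card (far_set V E u 4)" .
qed

lemma diameter_attained:
  obtains u w where "u \<in> V" "w \<in> V" "gdist V E u w = diameter V E"
    "\<And>a b. a \<in> V \<Longrightarrow> b \<in> V \<Longrightarrow> gdist V E a b \<le> diameter V E"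
proof -
  let ?A = "{gdist V E u v | u v. u \<in> V \<and> v \<in> V}"
  have "?A = (\<lambda>(u, v). gdist V E u v) ` (V \<times> V)" by auto
  then have "finite ?A" using finite_vertices by simp
  have "V \<noteq> {}" using tree unfolding is_tree_def by blast
  then have "?A \<noteq> {}" by blast
  have "diameter V E \<in> ?A"
    unfolding diameter_def using Max_in[OF \<open>finite ?A\<close> \<open>?A \<noteq> {}\<close>] .
  then obtain u w where "u \<in> V" "w \<in> V" "gdist V E u w = diameter V E" by auto
  moreover have "gdist V E a b \<le> diameter V E" if "a \<in> V" "b \<in> V" for a b
    unfolding diameter_def using Max_ge[OF \<open>finite ?A\<close>] that by blast
  ultimately show ?thesis using that by blast
qed

end

theorem mainTheorem15:
  fixes V :: "'a set" and E :: "'a \<Rightarrow> 'a \<Rightarrow> bool" and n :: nat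
  assumes "is_tree V E"
    and "card V = n" and "n \<ge> 7"
    and "\<forall>v. leaf V E v \<longrightarrow>
           int (card (sphere V E v 2)) > \<lceil>real n / 2\<rceil> - 4 \<and>
           int (card (far_set V E v 4)) < int (card (sphere V E v 2)) + 4 - \<lceil>real n / 2\<rceil>"
  shows "diameter V E \<le> 3"
proof (rule ccontr)
  interpret tree_graph V E using assms(1) by unfold_locales
  assume "\<not> diameter V E \<le> 3"
  obtain u w where u: "u \<in> V" and w: "w \<in> V" and uw: "gdist V E u w = diameter V E"
    and diam: "\<And>a b. a \<in> V \<Longrightarrow> b \<in> V \<Longrightarrow> gdist V E a b \<le> diameter V E"
    using diameter_attained by blast
  have wu: "gdist V E w u = diameter V E" using gdist_commute u w uw by simp
  have "leaf V E w" "card (sphere V E w 2) \<le> card (far_set V E u 4)"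
    using farthest_vertex_leaf[OF u w] uw diam u \<open>\<not> diameter V E \<le> 3\<close> by simp_all
  moreover have "leaf V E u" "card (sphere V E u 2) \<le> card (far_set V E w 4)"
    using farthest_vertex_leaf[OF w u] wu diam w \<open>\<not> diameter V E \<le> 3\<close> by simp_all
  moreover have "\<lceil>real n / 2\<rceil> \<ge> 4" using assms(3) by linarith
  ultimately show False using assms(4)[rule_format, of u] assms(4)[rule_format, of w] by linarith
qed

end
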